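(* Let $p$ be a prime and let $\Phi:\mathbb{N}\to\mathbb{N}$ be strictly increasing. For every continuous function $f:\mathbb{Z}_p\to\mathbb{Z}_p$ there exists a unique sequence $(B(m))_{m\ge 0}=(B(\Phi,f;m))_{m\ge0}$ of elements of $\mathbb{Z}_p$ such that \[ f(x)=\sum_{m=0}^{\infty} B(\Phi,f;m)\,\chi(\Phi,m;x)\quad\text{for all }x\in\mathbb{Z}_p. \] Moreover this sequence is given by \[ B(\Phi,f;m)=\begin{cases} f(m) & \text{if } m<p^{1+\Phi(0)},\\ f(m)-f(m-M(m)) & \text{otherwise.}\end{cases} \]
   Context: $\mathbb{N}=\{0,1,2,\dots\}$. $v_p$ and $|\cdot|_p$ denote the $p$-adic valuation and absolute value on $\mathbb{Z}_p$, normalized by $v_p(p)=1$, $|p|_p=p^{-1}$. Every $x\in\mathbb{Z}_p$ is written $x=\sum_{i\ge0}x_ip^i$ with digits $x_i\in\{0,\dots,p-1\}$; for a nonnegative integer $m$, $m_i$ denote its base-$p$ digits. Set $\Phi(-1):=-1$. For $m\in\mathbb{N}$ let $\tau(m)=\tau(\Phi;m):=\min\{h\in\mathbb{N}: m<p^{1+\Phi(h)}\}$. For $m\in\mathbb{N}$ and $x\in\mathbb{Z}_p$, $\chi(\Phi,m;x):=1$ if $|x-m|_p\le p^{-1-\Phi(\tau(m))}$ and $\chi(\Phi,m;x):=0$ otherwise. For $m\ge p^{1+\Phi(0)}$ (i.e. $\tau(m)\ge1$), $M(m)=M(\Phi;m):=\sum_{i=\Phi(\tau(m)-1)+1}^{\Phi(\tau(m))}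 m_i p^i$. *)

theory Defs
  imports "HOL-Computational_Algebra.Primes"
begin

text \<open>The p-adic integers Z_p, modelled as the inverse limit of the rings Z/p^k:
  an element x is the coherent sequence of its residues x k = (x mod p^k) in {0..<p^k}.\<close>

definition Zp :: "nat \<Rightarrow> (nat \<Rightarrow> int) set" where
  "Zp p = {x. \<forall>k. 0 \<le> x k \<and> x k < int p ^ k \<and> x k = x (Suc k) mod (int p ^ k)}"

definition zp_of_nat :: "nat \<Rightarrow> nat \<Rightarrow> (nat \<Rightarrow> int)" where
  "zp_of_nat p m = (\<lambda>k. int m mod (int p ^ k))"

definition zp_add :: "nat \<Rightarrow> (nat \<Rightarrow> int) \<Rightarrow> (nat \<Rightarrow> int) \<Rightarrow> (nat \<Rightarrow> int)" where
  "zp_add p x y = (\<lambda>k. (x k + y k) mod (int p ^ k))"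

definition zp_sub :: "nat \<Rightarrow> (nat \<Rightarrow> int) \<Rightarrow> (nat \<Rightarrow> int) \<Rightarrow> (nat \<Rightarrow> int)" where
  "zp_sub p x y = (\<lambda>k. (x k - y k) mod (int p ^ k))"

definition zp_mult :: "nat \<Rightarrow> (nat \<Rightarrow> int) \<Rightarrow> (nat \<Rightarrow> int) \<Rightarrow> (nat \<Rightarrow> int)" where
  "zp_mult p x y = (\<lambda>k. (x k * y k) mod (int p ^ k))"

text \<open>|x - y|_p \<le> p^(-k) iff x and y agree modulo p^k.\<close>
definition zp_close :: "nat \<Rightarrow> nat \<Rightarrow> (nat \<Rightarrow> int) \<Rightarrow> (nat \<Rightarrow> int) \<Rightarrow> bool" where
  "zp_close p k x y \<longleftrightarrow> x k = y k"

definition zp_continuous :: "nat \<Rightarrow> ((nat \<Rightarrow> int) \<Rightarrow> (nat \<Rightarrow> int)) \<Rightarrow> bool" where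
  "zp_continuous p f \<longleftrightarrow> (\<forall>x\<in>Zp p. f x \<in> Zp p) \<and>
     (\<forall>x\<in>Zp p. \<forall>n. \<exists>k. \<forall>y\<in>Zp p. zp_close p k y x \<longrightarrow> zp_close p n (f y) (f x))"

fun zp_psum :: "nat \<Rightarrow> (nat \<Rightarrow> (nat \<Rightarrow> int)) \<Rightarrow> nat \<Rightarrow> (nat \<Rightarrow> int)" where
  "zp_psum p a 0 = (\<lambda>k. 0)"
| "zp_psum p a (Suc N) = zp_add p (zp_psum p a N) (a N)"

definition zp_sums :: "nat \<Rightarrow> (nat \<Rightarrow> (nat \<Rightarrow> int)) \<Rightarrow> (nat \<Rightarrow> int) \<Rightarrow> bool" where
  "zp_sums p a s \<longleftrightarrow> (\<forall>n. \<exists>N0. \<forall>N\<ge>N0. zp_close p n (zp_psum p a N) s)"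

definition digit :: "nat \<Rightarrow> nat \<Rightarrow> nat \<Rightarrow> nat" where
  "digit p m i = m div p ^ i mod p"

definition tau :: "nat \<Rightarrow> (nat \<Rightarrow> nat) \<Rightarrow> nat \<Rightarrow> nat" where
  "tau p \<Phi> m = (LEAST h. m < p ^ (1 + \<Phi> h))"

definition chi :: "nat \<Rightarrow> (nat \<Rightarrow> nat) \<Rightarrow> nat \<Rightarrow> (nat \<Rightarrow> int) \<Rightarrow> nat" where
  "chi p \<Phi> m x = (if zp_close p (1 + \<Phi> (tau p \<Phi> m)) x (zp_of_nat p m) then 1 else 0)"

text \<open>M(m), used only when tau(m) \<ge> 1, so Phi(tau(m)-1) is a genuine value of Phi.\<close>
definition Mfun :: "nat \<Rightarrow> (nat \<Rightarrow> nat) \<Rightarrow> nat \<Rightarrow> nat" where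
  "Mfun p \<Phi> m = (\<Sum>i\<in>{\<Phi> (tau p \<Phi> m - 1) + 1 .. \<Phi> (tau p \<Phi> m)}. digit p m i * p ^ i)"

end

theory Submission
  imports Defs
begin

text \<open>For fixed x, the m with chi(m; x) = 1 are exactly the truncations x mod p^(1 + Phi(h)),
  h \<ge> 0. They form an increasing chain in which the predecessor of a non-initial member m is
  m - M(m), so the partial sums of the series telescope to f applied to the largest truncation
  below the cut-off; by continuity of f these converge to f(x). For uniqueness evaluate at a
  natural number x = M: there chi(m; M) = 1 forces m \<le> M and holds for m = M, so B(M) is
  determined by f(M) and the B(m) with m < M.\<close>

lemma Zp_bounds: "x \<in> Zp p \<Longrightarrow> 0 \<le> x k \<and> x k < int p ^ k"
  unfolding Zp_def by blast

lemma Zp_mod_power: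
  assumes "x \<in> Zp p" "k \<le> k'"
  shows "x k = x k' mod int p ^ k"
  using assms(2)
proof (induction k' rule: dec_induct)
  case base
  then show ?case using Zp_bounds[OF assms(1), of k] by simp
next
  case (step j)
  have "x j = x (Suc j) mod int p ^ j" using assms(1) unfolding Zp_def by blast
  moreover have "int p ^ k dvd int p ^ j" using step(1) by (simp add: le_imp_power_dvd)
  ultimately show ?case using step(3) by (simp add: mod_mod_cancel)
qed

lemma zp_of_nat_in_Zp: "p > 0 \<Longrightarrow> zp_of_nat p m \<in> Zp p"
  unfolding Zp_def zp_of_nat_def by (auto simp: mod_mod_cancel le_imp_power_dvd)

lemma zp_sub_in_Zp:
  assumes "p > 0" "a \<in> Zp p" "b \<in> Zp p"
  shows "zp_sub p a b \<in> Zp p"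
  unfolding Zp_def zp_sub_def mem_Collect_eq
proof (intro allI conjI)
  fix k
  show "0 \<le> (a k - b k) mod int p ^ k" "(a k - b k) mod int p ^ k < int p ^ k"
    using assms(1) by simp_all
  have "(a k - b k) mod int p ^ k = (a (Suc k) - b (Suc k)) mod int p ^ k"
    using Zp_mod_power[OF assms(2), of k "Suc k"] Zp_mod_power[OF assms(3), of k "Suc k"]
    by (metis le_SucI order_refl mod_diff_eq)
  then show "(a k - b k) mod int p ^ k = (a (Suc k) - b (Suc k)) mod int p ^ Suc k mod int p ^ k"
    by (simp add: mod_mod_cancel le_imp_power_dvd)
qed

lemma zp_psum_apply: "zp_psum p a N k = (\<Sum>m<N. a m k) mod int p ^ k"
  by (induction N) (simp_all add: zp_add_def mod_add_left_eq)

lemma zp_mult_indicator: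
  assumes "p \<ge> 2" "b \<in> Zp p"
  shows "zp_mult p b (zp_of_nat p (if P then 1 else 0)) k = (if P then b k else 0)"
proof (cases "k = 0")
  case True
  then show ?thesis using Zp_bounds[OF assms(2), of 0] by (simp add: zp_mult_def)
next
  case False
  have "(1::int) < int p ^ k" using assms(1) False by (intro one_less_power) auto
  then show ?thesis using Zp_bounds[OF assms(2), of k]
    by (auto simp: zp_mult_def zp_of_nat_def)
qed

lemma zp_sums_apply_eq:
  assumes "zp_sums p a s" "\<And>N. N0 \<le> N \<Longrightarrow> zp_psum p a N n = c"
  shows "s n = c"
proof -
  obtain N1 where "\<forall>N\<ge>N1. zp_close p n (zp_psum p a N) s"
    using assms(1) unfolding zp_sums_def by blast
  then show ?thesis using assms(2)[of "max N0 N1"] by (simp add: zp_close_def)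
qed

lemma mod_power_eq_sum_digits: "(m::nat) mod p ^ b = (\<Sum>i<b. digit p m i * p ^ i)"
proof (induction b)
  case 0
  then show ?case by simp
next
  case (Suc b)
  have "m mod p ^ Suc b = p ^ b * (m div p ^ b mod p) + m mod p ^ b"
    by (simp only: power_Suc2 mod_mult2_eq)
  then show ?case using Suc by (simp add: digit_def mult.commute)
qed

lemma int_mod_power_eq_self: "m < p ^ k \<Longrightarrow> int m mod int p ^ k = int m"
  by (metis of_nat_less_iff of_nat_power mod_pos_pos_trivial of_nat_0_le_iff)

definition chi_support :: "nat \<Rightarrow> (nat \<Rightarrow> nat) \<Rightarrow> (nat \<Rightarrow> int) \<Rightarrow> nat set" where
  "chi_support p \<Phi> x = {m. x (1 + \<Phi> (tau p \<Phi> m)) = int m}"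

definition chi_coeff :: "nat \<Rightarrow> (nat \<Rightarrow> nat) \<Rightarrow> (nat \<Rightarrow> nat \<Rightarrow> int) \<Rightarrow> nat \<Rightarrow> nat \<Rightarrow> int" where
  "chi_coeff p \<Phi> F m =
     (if m < p ^ (1 + \<Phi> 0) then F m else zp_sub p (F m) (F (m - Mfun p \<Phi> m)))"

abbreviation chi_series ::
    "nat \<Rightarrow> (nat \<Rightarrow> nat) \<Rightarrow> (nat \<Rightarrow> nat \<Rightarrow> int) \<Rightarrow> (nat \<Rightarrow> int) \<Rightarrow> nat \<Rightarrow> nat \<Rightarrow> int" where
  "chi_series p \<Phi> B x \<equiv> (\<lambda>m. zp_mult p (B m) (zp_of_nat p (chi p \<Phi> m x)))"

lemma chi_coeff_in_Zp: "p > 0 \<Longrightarrow> (\<And>m. F m \<in> Zp p) \<Longrightarrow> chi_coeff p \<Phi> F m \<in> Zp p"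
  by (simp add: chi_coeff_def zp_sub_in_Zp)

lemma tau_le: "m < p ^ (1 + \<Phi> h) \<Longrightarrow> tau p \<Phi> m \<le> h"
  unfolding tau_def by (rule Least_le)

context
  fixes p :: nat and \<Phi> :: "nat \<Rightarrow> nat"
  assumes p_ge_2: "p \<ge> 2" and mono_\<Phi>: "strict_mono \<Phi>"
begin

lemma level_mono: "h \<le> j \<Longrightarrow> 1 + \<Phi> h \<le> 1 + \<Phi> j"
  using mono_\<Phi> by (simp add: strict_mono_less_eq)

lemma less_power_tau: "m < p ^ (1 + \<Phi> (tau p \<Phi> m))"
proof -
  have "m < 2 ^ m" by (rule less_exp)
  also have "\<dots> \<le> p ^ m" using p_ge_2 by (rule power_mono) simp
  also have "\<dots> \<le> p ^ (1 + \<Phi> m)"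
    using strict_mono_imp_increasing[OF mono_\<Phi>, of m] p_ge_2 by (intro power_increasing) auto
  finally show ?thesis unfolding tau_def by (rule LeastI)
qed

lemma power_tau_pred_le: "1 \<le> tau p \<Phi> m \<Longrightarrow> p ^ (1 + \<Phi> (tau p \<Phi> m - 1)) \<le> m"
  using not_less_Least[of "tau p \<Phi> m - 1" "\<lambda>h. m < p ^ (1 + \<Phi> h)"]
  unfolding tau_def by simp

lemma tau_eq_0_iff: "tau p \<Phi> m = 0 \<longleftrightarrow> m < p ^ (1 + \<Phi> 0)"
  using less_power_tau[of m] tau_le[of m p \<Phi> 0] by auto

lemma diff_Mfun_eq_mod:
  assumes "1 \<le> tau p \<Phi> m"
  shows "m - Mfun p \<Phi> m = m mod p ^ (1 + \<Phi> (tau p \<Phi> m - 1))"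
proof -
  define a where "a = \<Phi> (tau p \<Phi> m - 1)"
  define c where "c = \<Phi> (tau p \<Phi> m)"
  have "a < c" unfolding a_def c_def using mono_\<Phi> assms by (simp add: strict_mono_less)
  then have split: "{..<1 + c} = {..<1 + a} \<union> {a + 1 .. c}" by auto
  have "m = m mod p ^ (1 + c)" using less_power_tau[of m] unfolding c_def by simp
  also have "\<dots> = (\<Sum>i<1 + a. digit p m i * p ^ i) + (\<Sum>i\<in>{a+1..c}. digit p m i * p ^ i)"
    unfolding mod_power_eq_sum_digits split by (rule sum.union_disjoint) auto
  also have "\<dots> = m mod p ^ (1 + a) + Mfun p \<Phi> m"
    by (simp only: mod_power_eq_sum_digits Mfun_def a_def c_def)
  finally show ?thesis unfolding a_def by linarith
qed

lemma chi_eq_indicator: "chi p \<Phi> m x = (if m \<in> chi_support p \<Phi> x then 1 else 0)"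
  using int_mod_power_eq_self[OF less_power_tau[of m]]
  by (simp add: chi_def chi_support_def zp_close_def zp_of_nat_def)

lemma truncation_in_chi_support:
  assumes "x \<in> Zp p"
  shows "nat (x (1 + \<Phi> j)) \<in> chi_support p \<Phi> x"
proof -
  define q where "q = nat (x (1 + \<Phi> j))"
  have q: "int q = x (1 + \<Phi> j)" using Zp_bounds[OF assms] q_def by simp
  then have "q < p ^ (1 + \<Phi> j)" using Zp_bounds[OF assms] by (metis of_nat_less_iff of_nat_power)
  then have "tau p \<Phi> q \<le> j" by (rule tau_le)
  then have "x (1 + \<Phi> (tau p \<Phi> q)) = x (1 + \<Phi> j) mod int p ^ (1 + \<Phi> (tau p \<Phi> q))"
    by (intro Zp_mod_power[OF assms] level_mono)
  also have "\<dots> = int q" using q int_mod_power_eq_self[OF less_power_tau[of q]] by simp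
  finally show ?thesis unfolding chi_support_def q_def by simp
qed

lemma chi_support_le_truncation:
  assumes "x \<in> Zp p" "m \<in> chi_support p \<Phi> x" "tau p \<Phi> m \<le> j"
  shows "m \<le> nat (x (1 + \<Phi> j))"
proof -
  have "int m = x (1 + \<Phi> j) mod int p ^ (1 + \<Phi> (tau p \<Phi> m))"
    using Zp_mod_power[OF assms(1) level_mono[OF assms(3)]] assms(2)
    unfolding chi_support_def by simp
  then have "int m \<le> x (1 + \<Phi> j)"
    using zmod_le_nonneg_dividend Zp_bounds[OF assms(1)] by metis
  then show ?thesis by simp
qed

lemma tau_less_of_chi_support:
  assumes "N \<in> chi_support p \<Phi> x" "m \<in> chi_support p \<Phi> x" "m < N"
  shows "tau p \<Phi> m < tau p \<Phi> N"
proof -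
  have "tau p \<Phi> m \<le> tau p \<Phi> N"
    using less_power_tau[of N] assms(3) by (intro tau_le) simp
  moreover have "tau p \<Phi> m \<noteq> tau p \<Phi> N" using assms unfolding chi_support_def by auto
  ultimately show ?thesis by simp
qed

lemma chi_support_below_tau_0:
  assumes "N \<in> chi_support p \<Phi> x" "tau p \<Phi> N = 0"
  shows "chi_support p \<Phi> x \<inter> {..<N} = {}"
  using tau_less_of_chi_support[OF assms(1)] assms(2) by fastforce

lemma Max_chi_support_below:
  assumes x: "x \<in> Zp p" and N: "N \<in> chi_support p \<Phi> x" and t: "1 \<le> tau p \<Phi> N"
  shows "N - Mfun p \<Phi> N \<in> chi_support p \<Phi> x \<inter> {..<N}"
    and "Max (chi_support p \<Phi> x \<inter> {..<N}) = N - Mfun p \<Phi> N"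
proof -
  define h where "h = tau p \<Phi> N - 1"
  define q where "q = N - Mfun p \<Phi> N"
  have "int q = int N mod int p ^ (1 + \<Phi> h)"
    using diff_Mfun_eq_mod[OF t] unfolding q_def h_def by (simp add: zmod_int)
  also have "\<dots> = x (1 + \<Phi> h)"
    using Zp_mod_power[OF x level_mono[of h "tau p \<Phi> N"]] N
    unfolding h_def chi_support_def by simp
  finally have q: "q = nat (x (1 + \<Phi> h))" by simp
  have "q < p ^ (1 + \<Phi> h)"
    using diff_Mfun_eq_mod[OF t] p_ge_2 unfolding q_def h_def by simp
  also have "\<dots> \<le> N" using power_tau_pred_le[OF t] unfolding h_def .
  finally have "q < N" .
  then show q_mem: "q \<in> chi_support p \<Phi> x \<inter> {..<N}"
    using truncation_in_chi_support[OF x, of h] q by simp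
  show "Max (chi_support p \<Phi> x \<inter> {..<N}) = q"
  proof (rule Max_eqI)
    fix m assume m: "m \<in> chi_support p \<Phi> x \<inter> {..<N}"
    then have "tau p \<Phi> m \<le> h"
      using tau_less_of_chi_support[OF N] unfolding h_def by fastforce
    with m show "m \<le> q" using chi_support_le_truncation[OF x] q by simp
  qed (use q_mem in auto)
qed

lemma zp_psum_chi_series:
  assumes "\<And>m. B m \<in> Zp p"
  shows "zp_psum p (chi_series p \<Phi> B x) N n
       = (\<Sum>m\<in>chi_support p \<Phi> x \<inter> {..<N}. B m n) mod int p ^ n"
  by (simp add: zp_psum_apply chi_eq_indicator zp_mult_indicator[OF p_ge_2 assms]
      sum.inter_restrict Int_commute)

lemma sum_chi_coeff_telescopes:
  assumes x: "x \<in> Zp p" and F: "\<And>m. F m \<in> Zp p"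
  defines "S N \<equiv> chi_support p \<Phi> x \<inter> {..<N}"
  shows "(\<Sum>m\<in>S N. chi_coeff p \<Phi> F m n) mod int p ^ n
         = (if S N = {} then 0 else F (Max (S N)) n)"
proof (induction N)
  case 0
  then show ?case by (simp add: S_def)
next
  case (Suc N)
  show ?case
  proof (cases "N \<in> chi_support p \<Phi> x")
    case False
    then have "S (Suc N) = S N" by (auto simp: S_def less_Suc_eq)
    then show ?thesis using Suc by simp
  next
    case N: True
    have S_Suc: "S (Suc N) = insert N (S N)" "N \<notin> S N"
      using N by (auto simp: S_def less_Suc_eq)
    have Max_S_Suc: "Max (S (Suc N)) = N" using N by (intro Max_eqI) (auto simp: S_def)
    have F_bounds: "0 \<le> F m n \<and> F m n < int p ^ n" for m using Zp_bounds[OF F] .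
    have sum_S_Suc: "(\<Sum>m\<in>S (Suc N). chi_coeff p \<Phi> F m n) mod int p ^ n
        = ((\<Sum>m\<in>S N. chi_coeff p \<Phi> F m n) mod int p ^ n + chi_coeff p \<Phi> F N n) mod int p ^ n"
      unfolding S_Suc by (simp add: S_def mod_add_right_eq add.commute)
    show ?thesis
    proof (cases "tau p \<Phi> N = 0")
      case True
      then have "S N = {}" using chi_support_below_tau_0[OF N] by (simp add: S_def)
      then show ?thesis
        using True F_bounds sum_S_Suc Max_S_Suc
        by (simp add: S_Suc tau_eq_0_iff chi_coeff_def)
    next
      case False
      define q where "q = N - Mfun p \<Phi> N"
      have "S N \<noteq> {}" "Max (S N) = q"
        using Max_chi_support_below[OF x N] False unfolding q_def S_def by auto
      then have "(\<Sum>m\<in>S N. chi_coeff p \<Phi> F m n) mod int p ^ n = F q n" using Suc by simp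
      moreover have "chi_coeff p \<Phi> F N n = (F N n - F q n) mod int p ^ n"
        using False tau_eq_0_iff by (simp add: chi_coeff_def zp_sub_def q_def)
      ultimately show ?thesis
        using sum_S_Suc Max_S_Suc F_bounds by (simp add: S_Suc mod_add_right_eq)
    qed
  qed
qed

lemma chi_support_close:
  assumes x: "x \<in> Zp p" and m: "m \<in> chi_support p \<Phi> x" and le: "nat (x (1 + \<Phi> k)) \<le> m"
  shows "zp_close p k (zp_of_nat p m) x"
proof -
  have k_le: "k \<le> 1 + \<Phi> k" using strict_mono_imp_increasing[OF mono_\<Phi>, of k] by simp
  have "int m mod int p ^ k = x k"
  proof (cases "tau p \<Phi> m \<le> k")
    case True
    then have "m = nat (x (1 + \<Phi> k))" using chi_support_le_truncation[OF x m True] le by linarith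
    then have "int m = x (1 + \<Phi> k)" using Zp_bounds[OF x] by simp
    then show ?thesis using Zp_mod_power[OF x k_le] by simp
  next
    case False
    then have "k \<le> 1 + \<Phi> (tau p \<Phi> m)" using k_le level_mono[of k "tau p \<Phi> m"] by linarith
    from Zp_mod_power[OF x this] show ?thesis using m unfolding chi_support_def by simp
  qed
  then show ?thesis by (simp add: zp_close_def zp_of_nat_def)
qed

lemma chi_series_sums:
  assumes f: "zp_continuous p f" and x: "x \<in> Zp p"
  shows "zp_sums p (chi_series p \<Phi> (chi_coeff p \<Phi> (\<lambda>m. f (zp_of_nat p m))) x) (f x)"
  unfolding zp_sums_def
proof
  fix n
  let ?F = "\<lambda>m. f (zp_of_nat p m)"
  let ?S = "\<lambda>N. chi_support p \<Phi> x \<inter> {..<N}"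
  have F: "?F m \<in> Zp p" for m
    using f zp_of_nat_in_Zp[of p m] p_ge_2 unfolding zp_continuous_def by simp
  have coeff: "chi_coeff p \<Phi> ?F m \<in> Zp p" for m
    using p_ge_2 F by (intro chi_coeff_in_Zp) simp_all
  obtain k where k: "\<forall>y\<in>Zp p. zp_close p k y x \<longrightarrow> zp_close p n (f y) (f x)"
    using f x unfolding zp_continuous_def by blast
  define q where "q = nat (x (1 + \<Phi> k))"
  have q: "q \<in> chi_support p \<Phi> x" unfolding q_def by (rule truncation_in_chi_support[OF x])
  show "\<exists>N0. \<forall>N\<ge>N0. zp_close p n (zp_psum p (chi_series p \<Phi> (chi_coeff p \<Phi> ?F) x) N) (f x)"
  proof (intro exI allI impI)
    fix N assume "Suc q \<le> N"
    then have q_mem: "q \<in> ?S N" using q by simp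
    define m where "m = Max (?S N)"
    have m: "m \<in> chi_support p \<Phi> x" "q \<le> m"
      using q_mem Max_in[of "?S N"] Max_ge[of "?S N" q] unfolding m_def by auto
    have "zp_psum p (chi_series p \<Phi> (chi_coeff p \<Phi> ?F) x) N n = ?F m n"
      unfolding zp_psum_chi_series[OF coeff] m_def
      using sum_chi_coeff_telescopes[of x ?F n N, OF x F] q_mem by auto
    moreover have "zp_close p n (?F m) (f x)"
      using k chi_support_close[OF x m(1) m(2)[unfolded q_def]] zp_of_nat_in_Zp[of p m] p_ge_2
      by simp
    ultimately show "zp_close p n (zp_psum p (chi_series p \<Phi> (chi_coeff p \<Phi> ?F) x) N) (f x)"
      by (simp add: zp_close_def)
  qed
qed

lemma chi_support_zp_of_nat:
  shows "M \<in> chi_support p \<Phi> (zp_of_nat p M)"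
    and "m \<in> chi_support p \<Phi> (zp_of_nat p M) \<Longrightarrow> m \<le> M"
proof -
  show "M \<in> chi_support p \<Phi> (zp_of_nat p M)"
    using int_mod_power_eq_self[OF less_power_tau[of M]]
    by (simp add: chi_support_def zp_of_nat_def)
  assume "m \<in> chi_support p \<Phi> (zp_of_nat p M)"
  then have "int m = int M mod int p ^ (1 + \<Phi> (tau p \<Phi> m))"
    by (simp add: chi_support_def zp_of_nat_def)
  then show "m \<le> M" by (metis zmod_le_nonneg_dividend of_nat_0_le_iff of_nat_le_iff)
qed

lemma zp_psum_chi_series_zp_of_nat:
  assumes "\<And>m. B m \<in> Zp p" "M < N"
  shows "zp_psum p (chi_series p \<Phi> B (zp_of_nat p M)) N n
       = ((\<Sum>m\<in>chi_support p \<Phi> (zp_of_nat p M) \<inter> {..<M}. B m n) + B M n) mod int p ^ n"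
proof -
  let ?S = "chi_support p \<Phi> (zp_of_nat p M)"
  have "?S \<inter> {..<N} = insert M (?S \<inter> {..<M})"
    using chi_support_zp_of_nat assms(2) by fastforce
  then show ?thesis by (simp add: zp_psum_chi_series[OF assms(1)] add.commute)
qed

lemma chi_series_coeffs_unique:
  assumes B: "\<And>m. B m \<in> Zp p" and B': "\<And>m. B' m \<in> Zp p"
    and sums: "\<And>M. zp_sums p (chi_series p \<Phi> B (zp_of_nat p M)) (g M)"
    and sums': "\<And>M. zp_sums p (chi_series p \<Phi> B' (zp_of_nat p M)) (g M)"
  shows "B = B'"
proof
  fix M
  show "B M = B' M"
  proof (induction M rule: less_induct)
    case (less M)
    show ?case
    proof
      fix n
      let ?S = "chi_support p \<Phi> (zp_of_nat p M) \<inter> {..<M}"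
      have "(\<Sum>m\<in>?S. B m n) = (\<Sum>m\<in>?S. B' m n)" using less by simp
      moreover have "g M n = ((\<Sum>m\<in>?S. B m n) + B M n) mod int p ^ n"
        by (rule zp_sums_apply_eq[OF sums, of "Suc M"]) (simp add: zp_psum_chi_series_zp_of_nat B)
      moreover have "g M n = ((\<Sum>m\<in>?S. B' m n) + B' M n) mod int p ^ n"
        by (rule zp_sums_apply_eq[OF sums', of "Suc M"]) (simp add: zp_psum_chi_series_zp_of_nat B')
      ultimately have "((\<Sum>m\<in>?S. B m n) + B M n - (\<Sum>m\<in>?S. B m n)) mod int p ^ n
          = ((\<Sum>m\<in>?S. B m n) + B' M n - (\<Sum>m\<in>?S. B m n)) mod int p ^ n"
        by (metis mod_diff_left_eq)
      then show "B M n = B' M n" using Zp_bounds[OF B, of M n] Zp_bounds[OF B', of M n] by simp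
    qed
  qed
qed

end

theorem proposition1:
  fixes p :: nat and \<Phi> :: "nat \<Rightarrow> nat" and f :: "(nat \<Rightarrow> int) \<Rightarrow> (nat \<Rightarrow> int)"
  assumes "prime p" and "strict_mono \<Phi>" and "zp_continuous p f"
  shows "(\<exists>!B. (\<forall>m. B m \<in> Zp p) \<and>
            (\<forall>x\<in>Zp p. zp_sums p (\<lambda>m. zp_mult p (B m) (zp_of_nat p (chi p \<Phi> m x))) (f x)))
       \<and> (let B = (\<lambda>m. if m < p ^ (1 + \<Phi> 0) then f (zp_of_nat p m)
                        else zp_sub p (f (zp_of_nat p m)) (f (zp_of_nat p (m - Mfun p \<Phi> m))))
          in (\<forall>m. B m \<in> Zp p) \<and>
             (\<forall>x\<in>Zp p. zp_sums p (\<lambda>m. zp_mult p (B m) (zp_of_nat p (chi p \<Phi> m x))) (f x)))"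
proof -
  have p: "p \<ge> 2" using assms(1) by (rule prime_ge_2_nat)
  have F: "f (zp_of_nat p m) \<in> Zp p" for m
    using assms(3) zp_of_nat_in_Zp[of p m] p unfolding zp_continuous_def by simp
  define B0 where "B0 = chi_coeff p \<Phi> (\<lambda>m. f (zp_of_nat p m))"
  have B0_in_Zp: "\<forall>m. B0 m \<in> Zp p"
    unfolding B0_def using p F by (intro allI chi_coeff_in_Zp) simp_all
  have B0_sums: "\<forall>x\<in>Zp p. zp_sums p (chi_series p \<Phi> B0 x) (f x)"
    unfolding B0_def using chi_series_sums[OF p assms(2,3)] by blast
  have unique: "B = B0"
    if B: "\<forall>m. B m \<in> Zp p" and B_sums: "\<forall>x\<in>Zp p. zp_sums p (chi_series p \<Phi> B x) (f x)" for B
  proof (rule chi_series_coeffs_unique[OF p assms(2)])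
    show "B m \<in> Zp p" "B0 m \<in> Zp p" for m using B B0_in_Zp by blast+
    show "zp_sums p (chi_series p \<Phi> B (zp_of_nat p M)) (f (zp_of_nat p M))"
      and "zp_sums p (chi_series p \<Phi> B0 (zp_of_nat p M)) (f (zp_of_nat p M))" for M
      using B_sums B0_sums zp_of_nat_in_Zp[of p M] p by simp_all
  qed
  have B_eq: "(\<lambda>m. if m < p ^ (1 + \<Phi> 0) then f (zp_of_nat p m)
                else zp_sub p (f (zp_of_nat p m)) (f (zp_of_nat p (m - Mfun p \<Phi> m)))) = B0"
    by (rule ext) (simp add: B0_def chi_coeff_def)
  show ?thesis unfolding Let_def B_eq using B0_in_Zp B0_sums unique by blast
qed

end
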